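(* Let $n\ge 3$ be an integer and let $a_1,\dots,a_n$ be real numbers such that $2a_k\le a_{k-1}+a_{k+1}$ for $k=2,\dots,n-1$ and $0\le 2a_n\le a_{n-1}$. Then for all $x\in(0,\pi)$, $$L_n(x)=\sum_{j=1}^n a_j\sin(jx)-\sum_{j=1}^{n-2}a_{j+2}\sin(jx)\ge 0.$$ *)

theory Defs
  imports Complex_Main
begin

end

theory Submission
  imports Defs
begin

text \<open>
  Since \<open>sin ((j + 2) x) - sin (j x) = 2 sin x cos ((j + 1) x)\<close>, the sum \<open>L\<^sub>n(x)\<close> equals
  \<open>2 sin x\<close> times the cosine polynomial \<open>c\<^sub>0/2 + \<Sum>\<^sub>k c\<^sub>k cos (k x)\<close> with \<open>c\<^sub>k = a\<^sub>k\<^sub>+\<^sub>1\<close>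
  for \<open>k < n\<close> and \<open>c\<^sub>k = 0\<close> beyond. The hypotheses say exactly that this coefficient
  sequence is convex, so two summations by parts write the cosine polynomial as a
  nonnegative combination of Fejer kernels, which are nonnegative on \<open>(0, \<pi>)\<close>.
\<close>

definition dirichlet_kernel :: "real \<Rightarrow> nat \<Rightarrow> real" where
  "dirichlet_kernel x j = 1/2 + (\<Sum>k=1..j. cos (real k * x))"

text \<open>Unnormalised: this is \<open>m + 1\<close> times the usual Fejer kernel.\<close>

definition fejer_kernel :: "real \<Rightarrow> nat \<Rightarrow> real" where
  "fejer_kernel x m = (\<Sum>j\<le>m. dirichlet_kernel x j)"

definition cosine_sum :: "(nat \<Rightarrow> real) \<Rightarrow> real \<Rightarrow> nat \<Rightarrow> real" where
  "cosine_sum c x N = c 0 / 2 + (\<Sum>k=1..N. c k * cos (real k * x))"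

lemma dirichlet_kernel_0 [simp]: "dirichlet_kernel x 0 = 1/2"
  by (simp add: dirichlet_kernel_def)

lemma dirichlet_kernel_Suc [simp]:
  "dirichlet_kernel x (Suc j) = dirichlet_kernel x j + cos (real (Suc j) * x)"
  by (simp add: dirichlet_kernel_def)

lemma fejer_kernel_0 [simp]: "fejer_kernel x 0 = 1/2"
  by (simp add: fejer_kernel_def)

lemma fejer_kernel_Suc [simp]:
  "fejer_kernel x (Suc m) = fejer_kernel x m + dirichlet_kernel x (Suc m)"
  by (simp add: fejer_kernel_def)

lemma cosine_sum_0 [simp]: "cosine_sum c x 0 = c 0 / 2"
  by (simp add: cosine_sum_def)

lemma cosine_sum_Suc [simp]:
  "cosine_sum c x (Suc N) = cosine_sum c x N + c (Suc N) * cos (real (Suc N) * x)"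
  by (simp add: cosine_sum_def)

lemma cosine_sum_cong: "(\<And>k. k \<le> N \<Longrightarrow> c k = d k) \<Longrightarrow> cosine_sum c x N = cosine_sum d x N"
  by (induction N) auto

lemma dirichlet_kernel_mult_one_minus_cos:
  "dirichlet_kernel x j * (1 - cos x) = (cos (real j * x) - cos (real (Suc j) * x)) / 2"
proof (induction j)
  case 0
  then show ?case by simp
next
  case (Suc j)
  have "cos (real (Suc j) * x) * cos x = (cos (real j * x) + cos (real (Suc (Suc j)) * x)) / 2"
    by (simp add: cos_times_cos algebra_simps)
  then show ?case
    using Suc.IH by (simp add: algebra_simps)
qed

lemma fejer_kernel_mult_one_minus_cos:
  "fejer_kernel x m * (1 - cos x) = (1 - cos (real (Suc m) * x)) / 2"
proof (induction m)
  case 0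
  then show ?case by simp
next
  case (Suc m)
  have "fejer_kernel x (Suc m) * (1 - cos x)
        = fejer_kernel x m * (1 - cos x) + dirichlet_kernel x (Suc m) * (1 - cos x)"
    by (simp add: distrib_right)
  then show ?case
    unfolding Suc.IH dirichlet_kernel_mult_one_minus_cos by (simp add: field_simps)
qed

lemma fejer_kernel_nonneg:
  assumes "0 < x" "x < pi"
  shows "fejer_kernel x m \<ge> 0"
proof -
  have "cos x < cos 0"
    using assms by (intro cos_monotone_0_pi) auto
  then have "1 - cos x > 0"
    by simp
  moreover have "fejer_kernel x m * (1 - cos x) \<ge> 0"
    by (simp add: fejer_kernel_mult_one_minus_cos)
  ultimately show ?thesis
    by (simp add: zero_le_mult_iff)
qed

lemma cosine_sum_by_parts:
  "cosine_sum c x N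
   = (\<Sum>m\<le>N. (c m - 2 * c (Suc m) + c (Suc (Suc m))) * fejer_kernel x m)
     + c (Suc N) * dirichlet_kernel x N + (c (Suc N) - c (Suc (Suc N))) * fejer_kernel x N"
  by (induction N) (simp_all add: algebra_simps)

lemma cosine_sum_nonneg_if_convex:
  assumes convex: "\<And>m. m \<le> N \<Longrightarrow> 2 * c (Suc m) \<le> c m + c (Suc (Suc m))"
    and "c (Suc N) = 0" "c (Suc (Suc N)) = 0"
    and "0 < x" "x < pi"
  shows "cosine_sum c x N \<ge> 0"
proof -
  have "0 \<le> c m - 2 * c (Suc m) + c (Suc (Suc m))" if "m \<le> N" for m
    using convex[OF that] by simp
  then have "(\<Sum>m\<le>N. (c m - 2 * c (Suc m) + c (Suc (Suc m))) * fejer_kernel x m) \<ge> 0"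
    using fejer_kernel_nonneg[OF \<open>0 < x\<close> \<open>x < pi\<close>]
    by (intro sum_nonneg mult_nonneg_nonneg) auto
  then show ?thesis
    using assms(2,3) by (simp add: cosine_sum_by_parts)
qed

lemma sine_sum_difference_eq_cosine_sum:
  "(\<Sum>j=1..m+2. a j * sin (real j * x)) - (\<Sum>j=1..m. a (j + 2) * sin (real j * x))
   = 2 * sin x * cosine_sum (\<lambda>k. a (k + 1)) x (Suc m)"
proof (induction m)
  case 0
  have "(\<Sum>j=1..2. a j * sin (real j * x)) = a 1 * sin x + a 2 * sin (2 * x)"
    by (simp add: numeral_2_eq_2)
  moreover have "sin (2 * x) = 2 * sin x * cos x"
    by (rule sin_double)
  ultimately show ?case
    by (simp add: algebra_simps)
next
  case (Suc m)
  let ?L = "\<lambda>m. (\<Sum>j=1..m+2. a j * sin (real j * x)) - (\<Sum>j=1..m. a (j + 2) * sin (real j * x))"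
  have shift: "real (m + 3) * x = real (m + 2) * x + x" "real (Suc m) * x = real (m + 2) * x - x"
    by (simp_all add: algebra_simps)
  have telescope:
    "sin (real (m + 3) * x) - sin (real (Suc m) * x) = 2 * sin x * cos (real (m + 2) * x)"
    unfolding shift sin_add sin_diff by simp
  have "?L (Suc m) = ?L m + a (m + 3) * (sin (real (m + 3) * x) - sin (real (Suc m) * x))"
    by (simp add: numeral_3_eq_3 algebra_simps)
  also have "\<dots> = 2 * sin x * cosine_sum (\<lambda>k. a (k + 1)) x (Suc (Suc m))"
    unfolding Suc.IH telescope by (simp add: numeral_3_eq_3 numeral_2_eq_2 algebra_simps)
  finally show ?case .
qed

theorem lemma2p4:
  fixes n :: nat and a :: "nat \<Rightarrow> real" and x :: real
  assumes "n \<ge> 3"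
    and "\<And>k. 2 \<le> k \<Longrightarrow> k \<le> n - 1 \<Longrightarrow> 2 * a k \<le> a (k - 1) + a (k + 1)"
    and "0 \<le> 2 * a n" and "2 * a n \<le> a (n - 1)"
    and "0 < x" and "x < pi"
  shows "(\<Sum>j=1..n. a j * sin (real j * x)) - (\<Sum>j=1..n-2. a (j + 2) * sin (real j * x)) \<ge> 0"
proof -
  have "n = (n - 2) + 2"
    using assms(1) by simp
  then obtain m where n: "n = m + 2"
    by blast
  define c where "c k = (if k < n then a (k + 1) else 0)" for k
  have "2 * c (Suc k) \<le> c k + c (Suc (Suc k))" if "k \<le> Suc m" for k
  proof (cases "k + 2 \<le> n - 1")
    case True
    then show ?thesis
      using assms(2)[of "k + 2"] by (simp add: c_def n)
  next
    case False
    then have "k = m \<or> k = Suc m"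
      using that n by auto
    then show ?thesis
      using assms(3,4) by (auto simp: c_def n)
  qed
  then have "cosine_sum c x (Suc m) \<ge> 0"
    using assms(5,6) by (intro cosine_sum_nonneg_if_convex) (auto simp: c_def n)
  moreover have "cosine_sum (\<lambda>k. a (k + 1)) x (Suc m) = cosine_sum c x (Suc m)"
    by (rule cosine_sum_cong) (simp add: c_def n)
  moreover have "sin x \<ge> 0"
    using assms(5,6) by (simp add: sin_ge_zero)
  ultimately show ?thesis
    using sine_sum_difference_eq_cosine_sum[where a = a and m = m and x = x] by (simp add: n)
qed

end
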